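(* Let $Q_k$ be a $K$-subset system. For every non-limit ordinal $\alpha$, every $\alpha^k$-special $T_0$ space is irreducible.
   Context: For a $K$-subset system $Q_k$ (an assignment $X\mapsto Q_k(X)$ with $\{\uparrow x\}\subseteq Q_k(X)\subseteq Q(X)$, the nonempty compact saturated sets, such that continuous images of $k$-Rudin sets are $k$-Rudin), a nonempty $A\subseteq X$ is $k$-Rudin if for some filtered $\mathcal K\subseteq Q_k(X)$, $\overline A$ is a minimal closed set meeting every member of $\mathcal K$. $K(X)$ is the set of classes of $k$-Rudin sets under $A\sim B\iff\overline A=\overline B$, with open sets $U^*=\{[A]\mid A\cap U\ne\emptyset\}$; $X$ embeds via $x\mapsto[\{x\}]$. $K_0(X)=X$, $K_{\beta+1}(X)=K(K_\beta(X))$, $K_\beta(X)=\bigcup_{\gamma<\beta}K_\gamma(X)$ for limit $\beta$. $\mathrm{rank}_k(X)$ is the least $\alpha$ with $K_\alpha(X)\cong K_{\alpha+1}(X)$. $X$ is $\alpha^k$-special if $\mathrm{rank}_k(X)=\alpha$ and $\alpha$ is the least ordinal for which $K_\alpha(X)$ has a greatest element in its specialization order. A space is irreducible if it is nonempty and not the union of two proper closed subsets. *)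

theory Defs
  imports "HOL-Analysis.Analysis"
begin

definition spec_le :: "'b topology \<Rightarrow> 'b \<Rightarrow> 'b \<Rightarrow> bool" where
  "spec_le Y x y \<longleftrightarrow> x \<in> Y closure_of {y}"

definition upset :: "'b topology \<Rightarrow> 'b \<Rightarrow> 'b set" where
  "upset Y x = {y \<in> topspace Y. spec_le Y x y}"

definition saturatedin :: "'b topology \<Rightarrow> 'b set \<Rightarrow> bool" where
  "saturatedin Y K \<longleftrightarrow> K \<subseteq> topspace Y \<and>
     K = topspace Y \<inter> \<Inter>{U. openin Y U \<and> K \<subseteq> U}"

definition Qsets :: "'b topology \<Rightarrow> 'b set set" where
  "Qsets Y = {K. K \<noteq> {} \<and> compactin Y K \<and> saturatedin Y K}"

definition filtered :: "'b set set \<Rightarrow> bool" where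
  "filtered \<K> \<longleftrightarrow> \<K> \<noteq> {} \<and>
     (\<forall>K1\<in>\<K>. \<forall>K2\<in>\<K>. \<exists>K3\<in>\<K>. K3 \<subseteq> K1 \<inter> K2)"

definition min_closed_meeting :: "'b topology \<Rightarrow> 'b set set \<Rightarrow> 'b set \<Rightarrow> bool" where
  "min_closed_meeting Y \<K> C \<longleftrightarrow> closedin Y C \<and> (\<forall>K\<in>\<K>. C \<inter> K \<noteq> {}) \<and>
     (\<forall>C'. closedin Y C' \<and> C' \<subseteq> C \<and> (\<forall>K\<in>\<K>. C' \<inter> K \<noteq> {}) \<longrightarrow> C' = C)"

definition kRudin :: "('b topology \<Rightarrow> 'b set set) \<Rightarrow> 'b topology \<Rightarrow> 'b set \<Rightarrow> bool" where
  "kRudin Qk Y A \<longleftrightarrow> A \<noteq> {} \<and> A \<subseteq> topspace Y \<and>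
     (\<exists>\<K>. \<K> \<subseteq> Qk Y \<and> filtered \<K> \<and> min_closed_meeting Y \<K> (Y closure_of A))"

text \<open>K-subset system (on all spaces whose carrier type is 'b).\<close>
definition K_subset_system :: "('b topology \<Rightarrow> 'b set set) \<Rightarrow> bool" where
  "K_subset_system Qk \<longleftrightarrow>
     (\<forall>Y. {upset Y x | x. x \<in> topspace Y} \<subseteq> Qk Y \<and> Qk Y \<subseteq> Qsets Y) \<and>
     (\<forall>(Y::'b topology) (Z::'b topology) f A.
        continuous_map Y Z f \<and> kRudin Qk Y A \<longrightarrow> kRudin Qk Z (f ` A))"

text \<open>The class [A] of a k-Rudin set A is represented by its canonical
  representative data, the closure of A (A ~ B iff cl A = cl B).
  Open sets: U* = {[A] | A meets U}.\<close>
definition Kpoints :: "('b topology \<Rightarrow> 'b set set) \<Rightarrow> 'b topology \<Rightarrow> 'b set set" where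
  "Kpoints Qk Y = {Y closure_of A | A. kRudin Qk Y A}"

definition Kspace :: "('b topology \<Rightarrow> 'b set set) \<Rightarrow> 'b topology \<Rightarrow> 'b set topology" where
  "Kspace Qk Y = topology_generated_by
     {{C \<in> Kpoints Qk Y. C \<inter> U \<noteq> {}} | U. openin Y U}"

definition rep_space :: "'a topology \<Rightarrow> 'a set set \<Rightarrow> 'a set topology" where
  "rep_space X S = topology_generated_by {{F \<in> S. F \<inter> U \<noteq> {}} | U. openin X U}"

text \<open>Ordinals are elements of an arbitrary well-ordered type 'o.\<close>
definition is_succ :: "'o::wellorder \<Rightarrow> 'o \<Rightarrow> bool" where
  "is_succ \<beta> \<gamma> \<longleftrightarrow> \<beta> < \<gamma> \<and> \<not> (\<exists>\<delta>. \<beta> < \<delta> \<and> \<delta> < \<gamma>)"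

definition osucc :: "'o::wellorder \<Rightarrow> 'o" where
  "osucc \<beta> = (LEAST \<gamma>. \<beta> < \<gamma>)"

definition is_zero :: "'o::wellorder \<Rightarrow> bool" where
  "is_zero \<gamma> \<longleftrightarrow> (\<forall>\<delta>. \<gamma> \<le> \<delta>)"

definition non_limit :: "'o::wellorder \<Rightarrow> bool" where
  "non_limit \<alpha> \<longleftrightarrow> is_zero \<alpha> \<or> (\<exists>\<beta>. is_succ \<beta> \<alpha>)"

text \<open>Carrier of K_gamma(X): K_0 = {cl{x}}, K_(b+1) = K(K_b) (flattened back to
  closed sets of X via C \<mapsto> cl_X (\<Union>C)), limits = unions.\<close>
definition Kset :: "('a set topology \<Rightarrow> 'a set set set) \<Rightarrow> 'a topology \<Rightarrow> 'o::wellorder \<Rightarrow> 'a set set" where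
  "Kset Qk X = wfrec {(x, y). x < y} (\<lambda>f \<gamma>.
     if is_zero \<gamma> then {X closure_of {x} | x. x \<in> topspace X}
     else if (\<exists>\<beta>. is_succ \<beta> \<gamma>) then
       (\<lambda>C. X closure_of (\<Union>C)) ` topspace (Kspace Qk (rep_space X (f (THE \<beta>. is_succ \<beta> \<gamma>))))
     else \<Union>{f \<beta> | \<beta>. \<beta> < \<gamma>})"

definition Ktower :: "('a set topology \<Rightarrow> 'a set set set) \<Rightarrow> 'a topology \<Rightarrow> 'o::wellorder \<Rightarrow> 'a set topology" where
  "Ktower Qk X \<gamma> = rep_space X (Kset Qk X \<gamma>)"

definition has_greatest :: "'b topology \<Rightarrow> bool" where
  "has_greatest Y \<longleftrightarrow> (\<exists>p\<in>topspace Y. \<forall>q\<in>topspace Y. spec_le Y q p)"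

text \<open>rank_k(X) = alpha (alpha must have a successor in 'o).\<close>
definition has_rank :: "('a set topology \<Rightarrow> 'a set set set) \<Rightarrow> 'a topology \<Rightarrow> 'o::wellorder \<Rightarrow> bool" where
  "has_rank Qk X \<alpha> \<longleftrightarrow> (\<exists>\<gamma>. \<alpha> < \<gamma>) \<and>
     Ktower Qk X \<alpha> homeomorphic_space Ktower Qk X (osucc \<alpha>) \<and>
     (\<forall>\<beta><\<alpha>. \<not> (Ktower Qk X \<beta> homeomorphic_space Ktower Qk X (osucc \<beta>)))"

definition special :: "('a set topology \<Rightarrow> 'a set set set) \<Rightarrow> 'a topology \<Rightarrow> 'o::wellorder \<Rightarrow> bool" where
  "special Qk X \<alpha> \<longleftrightarrow> has_rank Qk X \<alpha> \<and> has_greatest (Ktower Qk X \<alpha>) \<and>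
     (\<forall>\<beta><\<alpha>. \<not> has_greatest (Ktower Qk X \<beta>))"

definition irreducible_space :: "'b topology \<Rightarrow> bool" where
  "irreducible_space Y \<longleftrightarrow> topspace Y \<noteq> {} \<and>
     \<not> (\<exists>A B. closedin Y A \<and> closedin Y B \<and> A \<noteq> topspace Y \<and> B \<noteq> topspace Y \<and>
            A \<union> B = topspace Y)"

end

theory Submission
  imports Defs
begin

text \<open>Every level \<open>K\<^sub>\<gamma>(X)\<close> of the tower is a cover of \<open>X\<close> by closed irreducible sets.
  This holds for the point closures at level 0 and passes to unions at limit levels. At a
  successor level, a \<open>k\<close>-Rudin set of \<open>K\<^sub>\<beta>(X)\<close> is irreducible, because its closure is a
  minimal closed set meeting a filtered family; an irreducible family of irreducible closed sets
  has an irreducible union; and the cover persists because for every point \<open>F\<close> of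
  \<open>K\<^sub>\<beta>(X)\<close> the singleton \<open>{F}\<close> is \<open>k\<close>-Rudin. Finally, a greatest element of \<open>K\<^sub>\<alpha>(X)\<close>
  in the specialization order is a closed set containing every member of the cover, so it is
  \<open>X\<close> itself, which is therefore irreducible.\<close>

text \<open>Unlike \<open>irreducible_space\<close>, this admits the empty set.\<close>
definition irreducible_in :: "'b topology \<Rightarrow> 'b set \<Rightarrow> bool" where
  "irreducible_in X F \<longleftrightarrow>
     (\<forall>F1 F2. closedin X F1 \<and> closedin X F2 \<and> F \<subseteq> F1 \<union> F2 \<longrightarrow> F \<subseteq> F1 \<or> F \<subseteq> F2)"

lemma irreducible_inD:
  "\<lbrakk>irreducible_in X F; closedin X F1; closedin X F2; F \<subseteq> F1 \<union> F2\<rbrakk> \<Longrightarrow> F \<subseteq> F1 \<or> F \<subseteq> F2"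
  unfolding irreducible_in_def by blast

lemma irreducible_space_iff_irreducible_in_topspace:
  "irreducible_space X \<longleftrightarrow> topspace X \<noteq> {} \<and> irreducible_in X (topspace X)"
proof -
  have "A \<union> B = topspace X \<longleftrightarrow> topspace X \<subseteq> A \<union> B" if "closedin X A" "closedin X B" for A B
    using that closedin_subset by blast
  moreover have "A \<noteq> topspace X \<longleftrightarrow> \<not> topspace X \<subseteq> A" if "closedin X A" for A
    using that closedin_subset by blast
  ultimately show ?thesis
    unfolding irreducible_space_def irreducible_in_def by metis
qed

lemma irreducible_in_closure_of_singleton: "irreducible_in X (X closure_of {x})"
proof (cases "x \<in> topspace X")
  case True
  then have "X closure_of {x} \<subseteq> F \<longleftrightarrow> x \<in> F" if "closedin X F" for F
    using that by (simp add: closure_of_minimal_eq)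
  then show ?thesis
    unfolding irreducible_in_def by (meson UnE closedin_Un)
next
  case False
  then have "X closure_of {x} = {}" by (simp add: closure_of_eq_empty_gen)
  then show ?thesis unfolding irreducible_in_def by simp
qed

lemma min_closed_meeting_filtered_irreducible_in:
  assumes "filtered \<K>" and C: "min_closed_meeting Y \<K> C"
  shows "irreducible_in Y C"
  unfolding irreducible_in_def
proof (intro allI impI)
  fix D1 D2 assume D: "closedin Y D1 \<and> closedin Y D2 \<and> C \<subseteq> D1 \<union> D2"
  have "(\<forall>K\<in>\<K>. C \<inter> D1 \<inter> K \<noteq> {}) \<or> (\<forall>K\<in>\<K>. C \<inter> D2 \<inter> K \<noteq> {})"
  proof (rule ccontr)
    assume "\<not> ?thesis"
    then obtain K1 K2 where K12: "K1 \<in> \<K>" "K2 \<in> \<K>" "C \<inter> D1 \<inter> K1 = {}" "C \<inter> D2 \<inter> K2 = {}"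
      by blast
    moreover obtain K3 where "K3 \<in> \<K>" "K3 \<subseteq> K1 \<inter> K2"
      using \<open>filtered \<K>\<close> K12(1,2) unfolding filtered_def by blast
    moreover have "C \<inter> K3 \<noteq> {}"
      using C \<open>K3 \<in> \<K>\<close> unfolding min_closed_meeting_def by blast
    ultimately show False using D by blast
  qed
  moreover have "C' = C"
    if "closedin Y C'" "C' \<subseteq> C" "\<forall>K\<in>\<K>. C' \<inter> K \<noteq> {}" for C'
    using C that unfolding min_closed_meeting_def by blast
  moreover have "closedin Y (C \<inter> D1)" "closedin Y (C \<inter> D2)"
    using C D unfolding min_closed_meeting_def by auto
  ultimately have "C \<inter> D1 = C \<or> C \<inter> D2 = C"
    by (metis inf_le1)
  then show "C \<subseteq> D1 \<or> C \<subseteq> D2" by blast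
qed

lemma kRudin_imp_irreducible_in_closure:
  "kRudin Qk Y A \<Longrightarrow> irreducible_in Y (Y closure_of A)"
  unfolding kRudin_def using min_closed_meeting_filtered_irreducible_in by blast

lemma min_closed_meeting_upset:
  assumes "y \<in> topspace Y"
  shows "min_closed_meeting Y {upset Y y} (Y closure_of {y})"
proof -
  have y: "y \<in> Y closure_of {y}"
    using assms closure_of_subset[of "{y}" Y] by blast
  then have y_up: "y \<in> upset Y y"
    using assms unfolding upset_def spec_le_def by blast
  have "Y closure_of {y} \<subseteq> C"
    if C: "closedin Y C" "C \<inter> upset Y y \<noteq> {}" for C
  proof -
    obtain z where "z \<in> C" "y \<in> Y closure_of {z}"
      using C(2) unfolding upset_def spec_le_def by blast
    then have "y \<in> C"
      using C(1) closure_of_minimal[of "{z}" C] by blast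
    then show ?thesis
      using C(1) closure_of_minimal[of "{y}" C] by blast
  qed
  then show ?thesis
    using y y_up unfolding min_closed_meeting_def by auto
qed

lemma kRudin_singleton:
  assumes "K_subset_system Qk" and "y \<in> topspace Y"
  shows "kRudin Qk Y {y}"
proof -
  have "\<forall>Y. {upset Y x | x. x \<in> topspace Y} \<subseteq> Qk Y \<and> Qk Y \<subseteq> Qsets Y"
    using assms(1) unfolding K_subset_system_def by (rule conjunct1)
  then have "{upset Y x | x. x \<in> topspace Y} \<subseteq> Qk Y" by blast
  then have "{upset Y y} \<subseteq> Qk Y" using assms(2) by blast
  moreover have "filtered {upset Y y}" unfolding filtered_def by simp
  ultimately show ?thesis
    unfolding kRudin_def
    using assms(2) min_closed_meeting_upset[OF assms(2)] by (intro conjI exI) simp_all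
qed

lemma topspace_Kspace: "topspace (Kspace Qk Y) = {C \<in> Kpoints Qk Y. C \<inter> topspace Y \<noteq> {}}"
  unfolding Kspace_def topology_generated_by_topspace by (auto dest: openin_subset)

lemma closure_of_singleton_in_topspace_Kspace:
  assumes "K_subset_system Qk" and "y \<in> topspace Y"
  shows "Y closure_of {y} \<in> topspace (Kspace Qk Y)"
proof -
  have "Y closure_of {y} \<in> Kpoints Qk Y"
    using kRudin_singleton[OF assms] unfolding Kpoints_def by blast
  moreover have "y \<in> Y closure_of {y} \<inter> topspace Y"
    using assms(2) closure_of_subset[of "{y}" Y] by blast
  ultimately show ?thesis unfolding topspace_Kspace by blast
qed

lemma openin_rep_space: "openin X U \<Longrightarrow> openin (rep_space X S) {F \<in> S. F \<inter> U \<noteq> {}}"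
  unfolding rep_space_def by (rule topology_generated_by_Basis) blast

lemma topspace_rep_space: "topspace (rep_space X S) = {F \<in> S. F \<inter> topspace X \<noteq> {}}"
  unfolding rep_space_def topology_generated_by_topspace by (auto dest: openin_subset)

lemma closedin_rep_space_subset:
  assumes "\<forall>F\<in>S. F \<subseteq> topspace X" and "closedin X G"
  shows "closedin (rep_space X S) {F \<in> topspace (rep_space X S). F \<subseteq> G}"
proof -
  have "topspace (rep_space X S) - {F \<in> topspace (rep_space X S). F \<subseteq> G}
        = {F \<in> S. F \<inter> (topspace X - G) \<noteq> {}}"
    using assms(1) by (auto simp: topspace_rep_space)
  moreover have "openin X (topspace X - G)" using assms(2) by blast
  ultimately show ?thesis
    unfolding closedin_def using openin_rep_space by fastforce
qed

lemma spec_le_rep_space_imp_subset: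
  assumes "spec_le (rep_space X S) F G" and "closedin X G" and "F \<in> S" and "F \<subseteq> topspace X"
  shows "F \<subseteq> G"
proof
  fix x assume "x \<in> F"
  show "x \<in> G"
  proof (rule ccontr)
    assume "x \<notin> G"
    let ?T = "{H \<in> S. H \<inter> (topspace X - G) \<noteq> {}}"
    have open_T: "openin (rep_space X S) ?T"
      using assms(2) by (intro openin_rep_space) blast
    have F_T: "F \<in> ?T" using assms(3,4) \<open>x \<in> F\<close> \<open>x \<notin> G\<close> by blast
    have "G \<in> T" if "F \<in> T" "openin (rep_space X S) T" for T
      using assms(1) that unfolding spec_le_def in_closure_of by simp
    from this[OF F_T open_T] have "G \<in> ?T" .
    then show False by blast
  qed
qed

text \<open>The members of the family lying below either set of a closed cover of the union form
  closed subfamilies, so irreducibility of the family applies to them.\<close>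
lemma irreducible_in_closure_Union_rep_space:
  assumes S: "\<forall>F\<in>S. closedin X F \<and> irreducible_in X F"
    and C: "C \<subseteq> topspace (rep_space X S)" "irreducible_in (rep_space X S) C"
  shows "irreducible_in X (X closure_of \<Union>C)"
  unfolding irreducible_in_def
proof (intro allI impI)
  fix F1 F2 assume F: "closedin X F1 \<and> closedin X F2 \<and> X closure_of \<Union>C \<subseteq> F1 \<union> F2"
  let ?D = "\<lambda>G. {F \<in> topspace (rep_space X S). F \<subseteq> G}"
  have S_sub: "\<forall>F\<in>S. F \<subseteq> topspace X" using S closedin_subset by blast
  have C_S: "C \<subseteq> S" using C(1) topspace_rep_space by blast
  then have "\<Union>C \<subseteq> X closure_of \<Union>C"
    using S_sub by (intro closure_of_subset) blast
  then have "\<Union>C \<subseteq> F1 \<union> F2" using F by blast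
  then have "F \<subseteq> F1 \<or> F \<subseteq> F2" if "F \<in> C" for F
    using that C_S S F irreducible_inD[of X F F1 F2] by blast
  then have "C \<subseteq> ?D F1 \<union> ?D F2"
    using C(1) by blast
  moreover have "closedin (rep_space X S) (?D F1)" "closedin (rep_space X S) (?D F2)"
    using S_sub F closedin_rep_space_subset by blast+
  ultimately have "C \<subseteq> ?D F1 \<or> C \<subseteq> ?D F2"
    using irreducible_inD[OF C(2), of "?D F1" "?D F2"] by blast
  then have "\<Union>C \<subseteq> F1 \<or> \<Union>C \<subseteq> F2" by blast
  then show "X closure_of \<Union>C \<subseteq> F1 \<or> X closure_of \<Union>C \<subseteq> F2"
    using F closure_of_minimal by metis
qed

definition closed_irreducible_cover :: "'a topology \<Rightarrow> 'a set set \<Rightarrow> bool" where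
  "closed_irreducible_cover X S \<longleftrightarrow>
     (\<forall>F\<in>S. closedin X F \<and> irreducible_in X F) \<and> topspace X \<subseteq> \<Union>S"

lemma closed_irreducible_cover_point_closures:
  "closed_irreducible_cover X {X closure_of {x} | x. x \<in> topspace X}"
proof -
  have "x \<in> X closure_of {x}" if "x \<in> topspace X" for x
    using that closure_of_subset[of "{x}" X] by blast
  then have "topspace X \<subseteq> \<Union>{X closure_of {x} | x. x \<in> topspace X}" by blast
  then show ?thesis
    unfolding closed_irreducible_cover_def
    by (auto simp: irreducible_in_closure_of_singleton)
qed

lemma closed_irreducible_cover_Kspace:
  assumes Qk: "K_subset_system Qk" and S: "closed_irreducible_cover X S"
  shows "closed_irreducible_cover X
           ((\<lambda>C. X closure_of \<Union>C) ` topspace (Kspace Qk (rep_space X S)))"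
proof -
  let ?Y = "rep_space X S"
  have S_irr: "\<forall>F\<in>S. closedin X F \<and> irreducible_in X F"
    using S unfolding closed_irreducible_cover_def by blast
  have S_sub: "\<forall>F\<in>S. F \<subseteq> topspace X"
    using S_irr closedin_subset by blast
  have irr: "irreducible_in X (X closure_of \<Union>C)" if C: "C \<in> topspace (Kspace Qk ?Y)" for C
  proof -
    obtain A where A: "C = ?Y closure_of A" "kRudin Qk ?Y A"
      using C unfolding topspace_Kspace Kpoints_def by blast
    have "C \<subseteq> topspace ?Y"
      unfolding A(1) by (rule closure_of_subset_topspace)
    moreover have "irreducible_in ?Y C"
      unfolding A(1) using A(2) by (rule kRudin_imp_irreducible_in_closure)
    ultimately show ?thesis
      using S_irr irreducible_in_closure_Union_rep_space by blast
  qed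
  have cover: "\<exists>C\<in>topspace (Kspace Qk ?Y). x \<in> X closure_of \<Union>C" if x: "x \<in> topspace X" for x
  proof -
    obtain F where F: "F \<in> S" "x \<in> F"
      using S x unfolding closed_irreducible_cover_def by blast
    then have F_Y: "F \<in> topspace ?Y"
      using x by (auto simp: topspace_rep_space)
    let ?C = "?Y closure_of {F}"
    have "F \<in> ?C"
      using F_Y closure_of_subset[of "{F}" ?Y] by blast
    moreover have "?C \<subseteq> S"
      using closure_of_subset_topspace[of ?Y "{F}"] by (auto simp: topspace_rep_space)
    then have "\<Union>?C \<subseteq> X closure_of \<Union>?C"
      using S_sub by (intro closure_of_subset) blast
    ultimately have "x \<in> X closure_of \<Union>?C"
      using F(2) by blast
    then show ?thesis
      using closure_of_singleton_in_topspace_Kspace[OF Qk F_Y] by blast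
  qed
  have "topspace X \<subseteq> (\<Union>C\<in>topspace (Kspace Qk ?Y). X closure_of \<Union>C)"
    using cover by blast
  then show ?thesis
    unfolding closed_irreducible_cover_def using irr by auto
qed

lemma the_is_succ:
  assumes "is_succ \<beta> \<gamma>"
  shows "(THE \<beta>. is_succ \<beta> \<gamma>) = \<beta>"
proof (rule the_equality)
  show "is_succ \<beta> \<gamma>" by fact
  fix \<beta>' assume "is_succ \<beta>' \<gamma>"
  then show "\<beta>' = \<beta>" using assms unfolding is_succ_def by (metis linorder_neqE)
qed

lemma Kset_unfold:
  "Kset Qk X (\<gamma>::'o::wellorder) =
     (if is_zero \<gamma> then {X closure_of {x} | x. x \<in> topspace X}
     else if \<exists>\<beta>. is_succ \<beta> \<gamma> then
       (\<lambda>C. X closure_of (\<Union>C)) ` topspace (Kspace Qk (rep_space X (Kset Qk X (THE \<beta>. is_succ \<beta> \<gamma>))))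
     else \<Union>{Kset Qk X \<beta> | \<beta>. \<beta> < \<gamma>})"
proof -
  let ?F = "\<lambda>f \<gamma>.
     if is_zero \<gamma> then {X closure_of {x} | x. x \<in> topspace X}
     else if \<exists>\<beta>. is_succ \<beta> \<gamma> then
       (\<lambda>C. X closure_of (\<Union>C)) ` topspace (Kspace Qk (rep_space X (f (THE \<beta>. is_succ \<beta> \<gamma>))))
     else \<Union>{f \<beta> | \<beta>. (\<beta>::'o) < \<gamma>}"
  have "adm_wf {(x, y). x < y} ?F"
    unfolding adm_wf_def
  proof (intro allI impI)
    fix f g :: "'o \<Rightarrow> 'a set set" and \<gamma> :: 'o
    assume fg: "\<forall>\<beta>. (\<beta>, \<gamma>) \<in> {(x, y). x < y} \<longrightarrow> f \<beta> = g \<beta>"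
    have "f (THE \<beta>. is_succ \<beta> \<gamma>) = g (THE \<beta>. is_succ \<beta> \<gamma>)" if "is_succ \<beta> \<gamma>" for \<beta>
      using that fg the_is_succ[OF that] unfolding is_succ_def by simp
    moreover have "{f \<beta> | \<beta>. \<beta> < \<gamma>} = {g \<beta> | \<beta>. \<beta> < \<gamma>}" using fg by auto
    ultimately show "?F f \<gamma> = ?F g \<gamma>" by auto
  qed
  then show ?thesis
    unfolding Kset_def by (subst wfrec_fixpoint[OF wf]) simp_all
qed

lemma Kset_zero: "is_zero \<gamma> \<Longrightarrow> Kset Qk X \<gamma> = {X closure_of {x} | x. x \<in> topspace X}"
  by (subst Kset_unfold) simp

lemma Kset_succ:
  assumes "is_succ \<beta> \<gamma>"
  shows "Kset Qk X \<gamma> = (\<lambda>C. X closure_of (\<Union>C)) ` topspace (Kspace Qk (rep_space X (Kset Qk X \<beta>)))"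
proof -
  have "\<not> is_zero \<gamma>"
    using assms unfolding is_succ_def is_zero_def by (meson not_less)
  then show ?thesis
    using assms the_is_succ[OF assms] by (subst Kset_unfold) auto
qed

lemma Kset_limit:
  "\<not> is_zero \<gamma> \<Longrightarrow> \<nexists>\<beta>. is_succ \<beta> \<gamma> \<Longrightarrow> Kset Qk X \<gamma> = \<Union>{Kset Qk X \<beta> | \<beta>. \<beta> < \<gamma>}"
  by (subst Kset_unfold) simp

lemma closed_irreducible_cover_Kset:
  assumes "K_subset_system Qk"
  shows "closed_irreducible_cover X (Kset Qk X (\<gamma>::'o::wellorder))"
proof (induction \<gamma> rule: less_induct)
  case (less \<gamma>)
  consider "is_zero \<gamma>" | \<beta> where "is_succ \<beta> \<gamma>" | "\<not> is_zero \<gamma>" "\<nexists>\<beta>. is_succ \<beta> \<gamma>"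
    by blast
  then show ?case
  proof cases
    case 1
    then show ?thesis by (simp add: Kset_zero closed_irreducible_cover_point_closures)
  next
    case (2 \<beta>)
    then have "closed_irreducible_cover X (Kset Qk X \<beta>)"
      using less.IH unfolding is_succ_def by blast
    then show ?thesis
      using 2 assms by (simp add: Kset_succ closed_irreducible_cover_Kspace)
  next
    case 3
    note Kset_\<gamma> = Kset_limit[OF 3]
    obtain \<delta> where "\<delta> < \<gamma>" using 3(1) unfolding is_zero_def by (meson not_le)
    then have "topspace X \<subseteq> \<Union>(Kset Qk X \<gamma>)"
      using less.IH[of \<delta>] unfolding Kset_\<gamma> closed_irreducible_cover_def by blast
    moreover have "closedin X F \<and> irreducible_in X F" if F: "F \<in> Kset Qk X \<gamma>" for F
    proof -
      obtain \<beta> where "\<beta> < \<gamma>" "F \<in> Kset Qk X \<beta>"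
        using F unfolding Kset_\<gamma> by blast
      then show ?thesis
        using less.IH[of \<beta>] unfolding closed_irreducible_cover_def by blast
    qed
    ultimately show ?thesis
      unfolding closed_irreducible_cover_def by blast
  qed
qed

lemma irreducible_space_if_greatest_closed_irreducible:
  assumes S: "closed_irreducible_cover X S" and "has_greatest (rep_space X S)"
  shows "irreducible_space X"
proof -
  obtain G where G: "G \<in> topspace (rep_space X S)"
    and above: "\<forall>F\<in>topspace (rep_space X S). spec_le (rep_space X S) F G"
    using assms(2) unfolding has_greatest_def by blast
  have G_irr: "closedin X G" "irreducible_in X G"
    using S G unfolding closed_irreducible_cover_def topspace_rep_space by auto
  have "topspace X \<subseteq> G"
  proof
    fix x assume x: "x \<in> topspace X"
    then obtain F where F: "F \<in> S" "x \<in> F"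
      using S unfolding closed_irreducible_cover_def by blast
    moreover have "F \<subseteq> topspace X"
      using S F(1) closedin_subset unfolding closed_irreducible_cover_def by blast
    moreover have "F \<in> topspace (rep_space X S)"
      using F x by (auto simp: topspace_rep_space)
    ultimately have "F \<subseteq> G"
      using above G_irr(1) spec_le_rep_space_imp_subset by blast
    then show "x \<in> G" using F(2) by blast
  qed
  then have "G = topspace X" using closedin_subset[OF G_irr(1)] by blast
  moreover have "G \<noteq> {}" using G unfolding topspace_rep_space by blast
  ultimately show ?thesis
    using G_irr(2) by (simp add: irreducible_space_iff_irreducible_in_topspace)
qed

theorem mainTheorem8:
  fixes Qk :: "'a set topology \<Rightarrow> 'a set set set"
    and X :: "'a topology"
    and \<alpha> :: "'o::wellorder"
  assumes "K_subset_system Qk"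
    and "non_limit \<alpha>"
    and "special Qk X \<alpha>"
    and "t0_space X"
  shows "irreducible_space X"
proof (rule irreducible_space_if_greatest_closed_irreducible)
  show "closed_irreducible_cover X (Kset Qk X \<alpha>)"
    using assms(1) by (rule closed_irreducible_cover_Kset)
  show "has_greatest (rep_space X (Kset Qk X \<alpha>))"
    using assms(3) unfolding special_def Ktower_def by blast
qed
end
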